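(* Let $N\in\mathbb{N}$ and let $\mathbf{X}$ be an $\mathbb{R}^N$-valued Gaussian random vector with zero mean and symmetric positive-definite covariance matrix $\Sigma$. Fix $l\in\mathbb{N}_0$, let $K_{N,l}=\binom{N+l-1}{l}$, and let $\Psi_l(\mathbf{x};\Sigma)\in\mathbb{R}^{K_{N,l}}$ be a column vector whose entries are the polynomials $\Psi_{\mathbf{j}}(\mathbf{x};\Sigma)$, $|\mathbf{j}|=l$, $\mathbf{j}\in\mathbb{N}_0^N$, in some fixed order. Then the $K_{N,l}\times K_{N,l}$ matrix $\mathbf{A}_l=\mathbb{E}[\Psi_l(\mathbf{X};\Sigma)\Psi_l^T(\mathbf{X};\Sigma)]$ is symmetric and positive-definite.
   Context: For $\mathbf{j}\in\mathbb{N}_0^N$, $|\mathbf{j}|=j_1+\dots+j_N$ and $(\partial/\partial\mathbf{x})^{\mathbf{j}}=\partial^{|\mathbf{j}|}/\partial x_1^{j_1}\cdots\partial x_N^{j_N}$. The density of $\mathbf{X}$ is $\phi(\mathbf{x};\Sigma)=(2\pi)^{-N/2}(\det\Sigma)^{-1/2}\exp(-\tfrac12\mathbf{x}^T\Sigma^{-1}\mathbf{x})$; $H_{\mathbf{j}}(\mathbf{x};\Sigma)=\frac{(-1)^{|\mathbf{j}|}}{\phi(\mathbf{x};\Sigma)}\left(\frac{\partial}{\partial\mathbf{x}}\right)^{\mathbf{j}}\phi(\mathbf{x};\Sigma)$ and $\Psi_{\mathbf{j}}(\mathbf{x};\Sigma)=H_{\mathbf{j}}(\mathbf{x};\Sigma)/\sqrt{\mathbb{E}[H_{\mathbf{j}}^2(\mathbf{X};\Sigma)]}$.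 *)

theory Defs
  imports "HOL-Probability.Probability"
begin

definition pdiff :: "'n::finite \<Rightarrow> (real^'n \<Rightarrow> real) \<Rightarrow> (real^'n \<Rightarrow> real)" where
  "pdiff i f = (\<lambda>x. deriv (\<lambda>t. f (x + t *\<^sub>R axis i 1)) 0)"

definition mi_order :: "('n::finite \<Rightarrow> nat) \<Rightarrow> nat" where
  "mi_order j = (\<Sum>i\<in>UNIV. j i)"

text \<open>The order of differentiation is fixed by an (arbitrary) list of directions in which each i
  occurs exactly j i times; for smooth functions (as used here) the result does not depend on it.\<close>
definition mderiv :: "('n::finite \<Rightarrow> nat) \<Rightarrow> (real^'n \<Rightarrow> real) \<Rightarrow> (real^'n \<Rightarrow> real)" where
  "mderiv j f = foldr pdiff (SOME ds. \<forall>i. count_list ds i = j i) f"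

definition gauss_density :: "real^'n^'n \<Rightarrow> real^'n \<Rightarrow> real" where
  "gauss_density S x =
     (2 * pi) powr (- real CARD('n) / 2) * (det S) powr (- 1 / 2)
       * exp (- (1/2) * (x \<bullet> (matrix_inv S *v x)))"

definition hermite :: "real^'n^'n \<Rightarrow> ('n::finite \<Rightarrow> nat) \<Rightarrow> real^'n \<Rightarrow> real" where
  "hermite S j x = (- 1) ^ mi_order j / gauss_density S x * mderiv j (gauss_density S) x"

definition psi :: "real^'n^'n \<Rightarrow> ('n::finite \<Rightarrow> nat) \<Rightarrow> real^'n \<Rightarrow> real" where
  "psi S j x = hermite S j x /
     sqrt (LINT y|lborel. (hermite S j y)^2 * gauss_density S y)"

definition pos_def_mat :: "nat \<Rightarrow> (nat \<Rightarrow> nat \<Rightarrow> real) \<Rightarrow> bool" where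
  "pos_def_mat K A \<longleftrightarrow>
     (\<forall>v::nat \<Rightarrow> real. (\<exists>a<K. v a \<noteq> 0) \<longrightarrow> (\<Sum>a<K. \<Sum>b<K. v a * A a b * v b) > 0)"

end

theory Submission
  imports Defs
begin

text \<open>By the Gaussian integral formula, \<open>v\<^sup>T A\<^sub>l v = E[g(X)\<^sup>2]\<close> for the polynomial
  \<open>g = \<Sum>\<^sub>a v\<^sub>a \<Psi>\<^sub>j\<^sub>a\<close>, and this is positive unless \<open>g\<close> vanishes identically, the Gaussian
  density being continuous and positive. Differentiating \<open>\<phi>\<close> repeatedly shows that
  \<open>H\<^sub>j\<close> is a polynomial of degree \<open>|j|\<close> whose top-degree part is \<open>\<Prod>\<^sub>i ((\<Sigma>\<^sup>-\<^sup>1x)\<^sub>i)^j\<^sub>i\<close>.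
  Hence if \<open>g = 0\<close>, scaling \<open>x = s\<Sigma>y\<close> with \<open>s \<rightarrow> \<infinity>\<close> yields a vanishing linear
  combination of the monomials \<open>y\<^sup>j\<close>, \<open>|j| = l\<close>, so all \<open>v\<^sub>a\<close> are zero.\<close>

inductive polyfun :: "nat \<Rightarrow> (real^'n::finite \<Rightarrow> real) \<Rightarrow> bool" where
  polyfun_const: "polyfun k (\<lambda>x. c)"
| polyfun_inner: "polyfun 1 (\<lambda>x. a \<bullet> x)"
| polyfun_add: "polyfun k p \<Longrightarrow> polyfun k q \<Longrightarrow> polyfun k (\<lambda>x. p x + q x)"
| polyfun_mult: "polyfun k p \<Longrightarrow> polyfun m q \<Longrightarrow> polyfun (k + m) (\<lambda>x. p x * q x)"
| polyfun_mono: "polyfun k p \<Longrightarrow> k \<le> m \<Longrightarrow> polyfun m p"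

lemma polyfun_continuous_on: "polyfun k p \<Longrightarrow> continuous_on UNIV p"
  by (induction rule: polyfun.induct) (auto intro!: continuous_intros)

lemma polyfun_borel_measurable: "polyfun k p \<Longrightarrow> p \<in> borel_measurable borel"
  using polyfun_continuous_on borel_measurable_continuous_onI by blast

lemma polyfun_cmult: "polyfun k p \<Longrightarrow> polyfun k (\<lambda>x. c * p x)"
  using polyfun_mult[OF polyfun_const, of k p 0 c] by simp

lemma polyfun_diff: "polyfun k p \<Longrightarrow> polyfun k q \<Longrightarrow> polyfun k (\<lambda>x. p x - q x)"
  using polyfun_add[of k p "\<lambda>x. (-1) * q x"] polyfun_cmult[of k q "-1"] by simp

lemma polyfun_sum:
  "finite A \<Longrightarrow> (\<And>a. a \<in> A \<Longrightarrow> polyfun k (f a)) \<Longrightarrow> polyfun k (\<lambda>x. \<Sum>a\<in>A. f a x)"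
  by (induction A rule: finite_induct) (auto intro: polyfun_const polyfun_add)

text \<open>The clause for \<open>k = 0\<close> is needed because \<open>k - 1\<close> truncates: the derivative
  of a constant must be known to vanish in the product rule.\<close>
lemma polyfun_has_derivative_axis:
  assumes "polyfun k p"
  shows "\<exists>q. polyfun (k - 1) q \<and> (k = 0 \<longrightarrow> q = (\<lambda>_. 0)) \<and>
     (\<forall>x. ((\<lambda>t. p (x + t *\<^sub>R axis i 1)) has_real_derivative q x) (at 0))"
  using assms
proof (induction rule: polyfun.induct)
  case (polyfun_const k c)
  then show ?case by (intro exI[of _ "\<lambda>_. 0"]) (auto intro: polyfun.polyfun_const)
next
  case (polyfun_inner a)
  have "((\<lambda>t. a \<bullet> (x + t *\<^sub>R axis i 1)) has_real_derivative a $ i) (at 0)" for x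
  proof -
    have "(\<lambda>t. a \<bullet> (x + t *\<^sub>R axis i 1)) = (\<lambda>t. a \<bullet> x + t * (a $ i))"
      by (auto simp: inner_add_right inner_axis)
    then show ?thesis by (auto intro!: derivative_eq_intros)
  qed
  then show ?case by (intro exI[of _ "\<lambda>_. a $ i"]) (auto intro: polyfun.polyfun_const)
next
  case (polyfun_add k p q)
  then obtain p' q' where p': "polyfun (k - 1) p'" "k = 0 \<longrightarrow> p' = (\<lambda>_. 0)"
     "\<forall>x. ((\<lambda>t. p (x + t *\<^sub>R axis i 1)) has_real_derivative p' x) (at 0)"
    and q': "polyfun (k - 1) q'" "k = 0 \<longrightarrow> q' = (\<lambda>_. 0)"
     "\<forall>x. ((\<lambda>t. q (x + t *\<^sub>R axis i 1)) has_real_derivative q' x) (at 0)" by blast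
  show ?case
    by (rule exI[of _ "\<lambda>x. p' x + q' x"])
      (use p' q' in \<open>auto intro!: polyfun.polyfun_add derivative_eq_intros\<close>)
next
  case (polyfun_mult k p m q)
  then obtain p' q' where p': "polyfun (k - 1) p'" "k = 0 \<longrightarrow> p' = (\<lambda>_. 0)"
     "\<forall>x. ((\<lambda>t. p (x + t *\<^sub>R axis i 1)) has_real_derivative p' x) (at 0)"
    and q': "polyfun (m - 1) q'" "m = 0 \<longrightarrow> q' = (\<lambda>_. 0)"
     "\<forall>x. ((\<lambda>t. q (x + t *\<^sub>R axis i 1)) has_real_derivative q' x) (at 0)" by blast
  have deriv: "((\<lambda>t. p (x + t *\<^sub>R axis i 1) * q (x + t *\<^sub>R axis i 1)) has_real_derivative
      p' x * q x + p x * q' x) (at 0)" for x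
    using DERIV_mult[OF p'(3)[rule_format, of x] q'(3)[rule_format, of x]] by (simp add: mult.commute)
  have "polyfun (k + m - 1) (\<lambda>x. p' x * q x + p x * q' x)"
  proof (cases "k = 0 \<or> m = 0")
    case True
    then show ?thesis
      using p' q' polyfun.polyfun_mult[OF polyfun_mult.hyps(1) q'(1)]
        polyfun.polyfun_mult[OF p'(1) polyfun_mult.hyps(2)] by auto
  next
    case False
    then show ?thesis
      using polyfun.polyfun_mult[OF p'(1) polyfun_mult.hyps(2)]
        polyfun.polyfun_mult[OF polyfun_mult.hyps(1) q'(1)]
      by (auto intro!: polyfun.polyfun_add elim!: polyfun.polyfun_mono)
  qed
  then show ?case
    using deriv p'(2) q'(2) by (intro exI[of _ "\<lambda>x. p' x * q x + p x * q' x"]) auto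
next
  case (polyfun_mono k p m)
  then obtain q where q: "polyfun (k - 1) q" "k = 0 \<longrightarrow> q = (\<lambda>_. 0)"
     "\<forall>x. ((\<lambda>t. p (x + t *\<^sub>R axis i 1)) has_real_derivative q x) (at 0)" by blast
  have "polyfun (m - 1) q" using q(1) polyfun_mono.hyps(2) by (auto intro: polyfun.polyfun_mono)
  then show ?case using q polyfun_mono.hyps(2) by (intro exI[of _ q]) auto
qed

lemma polyfun_bound: "polyfun k p \<Longrightarrow> \<exists>C\<ge>0. \<forall>x. \<bar>p x\<bar> \<le> C * (1 + norm x) ^ k"
proof (induction rule: polyfun.induct)
  case (polyfun_const k c)
  have "\<bar>c\<bar> \<le> \<bar>c\<bar> * (1 + norm x) ^ k" for x :: "real^'n"
    by (rule mult_le_cancel_left1[THEN iffD2]) (auto intro: one_le_power)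
  then show ?case by (intro exI[of _ "\<bar>c\<bar>"]) auto
next
  case (polyfun_inner a)
  have "\<bar>a \<bullet> x\<bar> \<le> norm a * (1 + norm x) ^ 1" for x
    using Cauchy_Schwarz_ineq2[of a x] by (smt (verit) mult_left_mono norm_ge_zero power_one_right)
  then show ?case by (intro exI[of _ "norm a"]) auto
next
  case (polyfun_add k p q)
  then obtain C D where "C \<ge> 0" "D \<ge> 0"
    "\<forall>x. \<bar>p x\<bar> \<le> C * (1 + norm x) ^ k" "\<forall>x. \<bar>q x\<bar> \<le> D * (1 + norm x) ^ k"
    by blast
  then show ?case
    by (intro exI[of _ "C + D"])
      (auto simp: algebra_simps intro: abs_triangle_ineq[THEN order_trans] add_mono)
next
  case (polyfun_mult k p m q)
  then obtain C D where CD: "C \<ge> 0" "D \<ge> 0"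
    "\<forall>x. \<bar>p x\<bar> \<le> C * (1 + norm x) ^ k" "\<forall>x. \<bar>q x\<bar> \<le> D * (1 + norm x) ^ m"
    by blast
  have "\<bar>p x * q x\<bar> \<le> (C * D) * (1 + norm x) ^ (k + m)" for x
  proof -
    have "\<bar>p x * q x\<bar> = \<bar>p x\<bar> * \<bar>q x\<bar>" by (simp add: abs_mult)
    also have "\<dots> \<le> (C * (1 + norm x) ^ k) * (D * (1 + norm x) ^ m)"
      using CD by (intro mult_mono) auto
    also have "\<dots> = (C * D) * (1 + norm x) ^ (k + m)" by (simp add: power_add algebra_simps)
    finally show ?thesis .
  qed
  then show ?case using CD by (intro exI[of _ "C * D"]) auto
next
  case (polyfun_mono k p m)
  then obtain C where C: "C \<ge> 0" "\<forall>x. \<bar>p x\<bar> \<le> C * (1 + norm x) ^ k" by blast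
  have "\<bar>p x\<bar> \<le> C * (1 + norm x) ^ m" for x
    using C(2)[rule_format, of x]
      mult_left_mono[OF power_increasing[OF polyfun_mono.hyps(2), of "1 + norm x"] C(1)]
    by auto
  then show ?case using C by auto
qed

lemma polyfun_scaled_tendsto_0:
  assumes "polyfun k p"
  shows "((\<lambda>s. p (s *\<^sub>R x) / s ^ (k + 1)) \<longlongrightarrow> 0) at_top"
proof -
  obtain C where C: "C \<ge> 0" "\<forall>x. \<bar>p x\<bar> \<le> C * (1 + norm x) ^ k"
    using polyfun_bound[OF assms] by blast
  define B where "B = C * (1 + norm x) ^ k"
  have "eventually (\<lambda>s. norm (p (s *\<^sub>R x) / s ^ (k + 1)) \<le> B / s) at_top"
    using eventually_ge_at_top[of "1::real"]
  proof eventually_elim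
    case (elim s)
    have "1 + norm (s *\<^sub>R x) \<le> s * (1 + norm x)" using elim by (simp add: algebra_simps)
    then have "(1 + norm (s *\<^sub>R x)) ^ k \<le> (s * (1 + norm x)) ^ k"
      by (intro power_mono) auto
    then have "\<bar>p (s *\<^sub>R x)\<bar> \<le> C * (s * (1 + norm x)) ^ k"
      using C(2)[rule_format, of "s *\<^sub>R x"] mult_left_mono[OF _ C(1)] by (meson order_trans)
    also have "\<dots> = B * s ^ k" by (simp add: B_def power_mult_distrib)
    finally show ?case using elim by (simp add: abs_divide divide_simps power_add)
  qed
  moreover have "((\<lambda>s. B / s) \<longlongrightarrow> 0) at_top"
    by (intro tendsto_divide_0[OF tendsto_const] filterlim_at_top_imp_at_infinity filterlim_ident)
  ultimately show ?thesis by (rule Lim_null_comparison)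
qed

text \<open>Induction on the variables: grouping by the exponent of \<open>y i0\<close> gives a univariate
  polynomial in \<open>y i0\<close>, whose coefficients must all vanish.\<close>
lemma polynomial_eq_0_imp_coeffs_eq_0:
  fixes c :: "('i \<Rightarrow> nat) \<Rightarrow> real"
  assumes "finite I" "finite J" "\<forall>j\<in>J. \<forall>j'\<in>J. (\<forall>i\<in>I. j i = j' i) \<longrightarrow> j = j'"
    and "\<forall>y. (\<Sum>j\<in>J. c j * (\<Prod>i\<in>I. y i ^ j i)) = 0"
  shows "\<forall>j\<in>J. c j = 0"
  using assms
proof (induction I arbitrary: J rule: finite_induct)
  case empty
  show ?case
  proof
    fix j assume "j \<in> J"
    then have "J = {j}" using empty.prems(2) by auto
    then show "c j = 0" using empty.prems(3) by simp
  qed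
next
  case (insert i0 I)
  define K where "K = Max ((\<lambda>j. j i0) ` J)"
  have jK: "j i0 \<le> K" if "j \<in> J" for j using that insert.prems(1) unfolding K_def by auto
  define b where "b k y = (\<Sum>j\<in>{j\<in>J. j i0 = k}. c j * (\<Prod>i\<in>I. y i ^ j i))" for k y
  have b_eq_0: "b k y = 0" if "k \<le> K" for k y
  proof -
    have "(\<Sum>k\<le>K. b k y * t ^ k) = 0" for t
    proof -
      have "(\<Sum>k\<le>K. b k y * t ^ k) =
          (\<Sum>k\<le>K. \<Sum>j\<in>{j\<in>J. j i0 = k}. c j * (t ^ j i0 * (\<Prod>i\<in>I. y i ^ j i)))"
        unfolding b_def sum_distrib_right by (intro sum.cong refl) (auto simp: algebra_simps)
      also have "\<dots> = (\<Sum>j\<in>J. c j * (t ^ j i0 * (\<Prod>i\<in>I. y i ^ j i)))"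
        by (rule sum.group) (use insert.prems(1) jK in auto)
      also have "\<dots> = (\<Sum>j\<in>J. c j * (\<Prod>i\<in>insert i0 I. (y(i0 := t)) i ^ j i))"
      proof (intro sum.cong refl arg_cong2[where f="(*)"])
        fix j
        have "(\<Prod>i\<in>I. (y(i0 := t)) i ^ j i) = (\<Prod>i\<in>I. y i ^ j i)"
          using insert.hyps(2) by (intro prod.cong) auto
        then show "t ^ j i0 * (\<Prod>i\<in>I. y i ^ j i) = (\<Prod>i\<in>insert i0 I. (y(i0 := t)) i ^ j i)"
          using insert.hyps by simp
      qed
      also have "\<dots> = 0" using insert.prems(3) by blast
      finally show ?thesis .
    qed
    then show ?thesis using polyfun_eq_0[of "\<lambda>k. b k y" K] that by blast
  qed
  show ?case
  proof
    fix j assume j: "j \<in> J"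
    have "\<forall>j'\<in>{j'\<in>J. j' i0 = j i0}. c j' = 0"
      using insert.prems(1,2) b_eq_0[OF jK[OF j]] unfolding b_def
      by (intro insert.IH) auto
    then show "c j = 0" using j by auto
  qed
qed

lemma lborel_integrable_euclidean_affine:
  fixes f :: "'a::euclidean_space \<Rightarrow> real"
  assumes f: "integrable lborel f" and c: "c \<noteq> 0"
  shows "integrable lborel (\<lambda>x. f (t + c *\<^sub>R x))"
proof -
  have [measurable]: "f \<in> borel_measurable borel" using f by (simp add: borel_measurable_integrable)
  have "(\<integral>\<^sup>+x. ennreal (norm (f x)) \<partial>lborel) =
      ennreal (\<bar>c\<bar>^DIM('a)) * (\<integral>\<^sup>+x. ennreal (norm (f (t + c *\<^sub>R x))) \<partial>lborel)"
    by (subst lborel_affine[OF c, of t])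
      (simp add: nn_integral_density nn_integral_distr nn_integral_cmult)
  with f c show ?thesis
    unfolding integrable_iff_bounded by (auto simp: ennreal_mult_less_top)
qed

lemma integral_pos_if_continuous:
  fixes f :: "'a::euclidean_space \<Rightarrow> real"
  assumes cont: "continuous_on UNIV f" and nonneg: "\<And>x. f x \<ge> 0"
    and int: "integrable lborel f" and pos: "f z > 0"
  shows "integral\<^sup>L lborel f > 0"
proof (rule ccontr)
  assume "\<not> integral\<^sup>L lborel f > 0"
  moreover have "integral\<^sup>L lborel f \<ge> 0" using nonneg by simp
  ultimately have "AE x in lborel. f x = 0"
    using integral_nonneg_eq_0_iff_AE[OF int] nonneg by simp
  moreover have "{x. f x \<noteq> 0} \<in> sets lborel"
    using cont borel_measurable_continuous_onI by measurable
  ultimately have null: "emeasure lborel {x. f x \<noteq> 0} = 0"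
    using AE_iff_measurable[of "{x. f x \<noteq> 0}" lborel] by simp
  have "open {x. f x > 0}"
    using open_Collect_less[of "\<lambda>_. 0" f] cont by (simp add: continuous_on_const)
  then obtain e where e: "e > 0" "ball z e \<subseteq> {x. f x > 0}"
    using pos open_contains_ball_eq by blast
  then have "emeasure lborel (ball z e) \<le> emeasure lborel {x. f x \<noteq> 0}"
    using \<open>{x. f x \<noteq> 0} \<in> sets lborel\<close> by (intro emeasure_mono) auto
  with null content_ball_pos[OF e(1), of z] show False by (simp add: measure_def)
qed

lemma quadratic_form_eq_integral_square:
  fixes f :: "'i \<Rightarrow> 'a \<Rightarrow> real"
  assumes "finite A" "\<And>a b. a \<in> A \<Longrightarrow> b \<in> A \<Longrightarrow> integrable M (\<lambda>x. f a x * f b x)"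
  shows "(\<Sum>a\<in>A. \<Sum>b\<in>A. v a * (\<integral>x. f a x * f b x \<partial>M) * v b) =
    (\<integral>x. (\<Sum>a\<in>A. v a * f a x)\<^sup>2 \<partial>M)"
proof -
  have "(\<Sum>a\<in>A. \<Sum>b\<in>A. v a * (\<integral>x. f a x * f b x \<partial>M) * v b) =
      (\<Sum>a\<in>A. \<Sum>b\<in>A. \<integral>x. v a * v b * (f a x * f b x) \<partial>M)"
    by (simp add: algebra_simps)
  also have "\<dots> = (\<integral>x. (\<Sum>a\<in>A. \<Sum>b\<in>A. v a * v b * (f a x * f b x)) \<partial>M)"
    using assms by (simp add: integrable_sum)
  also have "\<dots> = (\<integral>x. (\<Sum>a\<in>A. v a * f a x)\<^sup>2 \<partial>M)"
    by (simp add: power2_eq_square sum_distrib_left sum_distrib_right algebra_simps)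
  finally show ?thesis .
qed

lemma prod_power_count_list_Cons:
  fixes f :: "'i::finite \<Rightarrow> 'a::comm_monoid_mult"
  shows "(\<Prod>i\<in>UNIV. f i ^ count_list (d # ds) i) = f d * (\<Prod>i\<in>UNIV. f i ^ count_list ds i)"
proof -
  have "(\<Prod>i\<in>UNIV. f i ^ count_list (d # ds) i) =
      (\<Prod>i\<in>UNIV. (if i = d then f i else 1) * f i ^ count_list ds i)"
    by (intro prod.cong) auto
  then show ?thesis by (simp add: prod.distrib prod.delta)
qed

lemma ex_count_list_eq: "\<exists>ds. \<forall>i. count_list ds i = (j::'i::finite \<Rightarrow> nat) i"
proof -
  obtain ds where "mset ds = Abs_multiset j" using ex_mset by blast
  then have "count_list ds i = j i" for i
    by (metis count_Abs_multiset count_mset finite)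
  then show ?thesis by blast
qed

lemma invertible_if_pos_def:
  fixes A :: "real^'n::finite^'n"
  assumes "\<forall>x. x \<noteq> 0 \<longrightarrow> x \<bullet> (A *v x) > 0"
  shows "invertible A"
proof -
  have "\<forall>x. A *v x = 0 \<longrightarrow> x = 0" using assms by force
  then show ?thesis using matrix_left_invertible_ker invertible_left_inverse by blast
qed

lemma
  fixes A :: "real^'n::finite^'n"
  assumes "invertible A"
  shows matrix_inv_right: "A ** matrix_inv A = mat 1"
    and matrix_inv_left: "matrix_inv A ** A = mat 1"
  using someI_ex[OF assms[unfolded invertible_def]] unfolding matrix_inv_def by auto

lemma transpose_matrix_inv_if_symmetric:
  fixes A :: "real^'n::finite^'n"
  assumes "transpose A = A" "invertible A"
  shows "transpose (matrix_inv A) = matrix_inv A"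
proof -
  have left: "transpose (matrix_inv A) ** A = mat 1"
    by (metis assms matrix_inv_right matrix_transpose_mul transpose_mat)
  have "transpose (matrix_inv A) = transpose (matrix_inv A) ** (A ** matrix_inv A)"
    by (simp add: assms(2) matrix_inv_right)
  also have "\<dots> = matrix_inv A"
    by (simp add: matrix_mul_assoc left)
  finally show ?thesis .
qed

locale covariance_matrix =
  fixes S :: "real^'n::finite^'n"
  assumes symmetric: "transpose S = S"
    and pos_def: "\<forall>x. x \<noteq> 0 \<longrightarrow> x \<bullet> (S *v x) > 0"
begin

lemma invertible: "invertible S"
  using pos_def by (rule invertible_if_pos_def)

lemma det_nonzero: "det S \<noteq> 0"
  using invertible invertible_det_nz by blast

lemma matrix_inv_cancel [simp]:
  "matrix_inv S *v (S *v z) = z" "S *v (matrix_inv S *v z) = z"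
  by (simp_all add: matrix_vector_mul_assoc matrix_inv_left matrix_inv_right invertible)

definition mahalanobis_sq :: "real^'n \<Rightarrow> real" where
  "mahalanobis_sq x = x \<bullet> (matrix_inv S *v x)"

definition prec :: "'n \<Rightarrow> real^'n \<Rightarrow> real" where
  "prec i x = (matrix_inv S *v x) $ i"

lemma prec_S [simp]: "prec i (S *v z) = z $ i"
  by (simp add: prec_def)

lemma prec_scaleR: "prec i (c *\<^sub>R x) = c * prec i x"
  by (simp add: prec_def matrix_vector_mult_scaleR)

lemma polyfun_prec: "polyfun 1 (prec i)"
proof -
  have "prec i = (\<lambda>x. (matrix_inv S $ i) \<bullet> x)"
    by (auto simp: prec_def matrix_vector_mult_def inner_vec_def)
  then show ?thesis using polyfun_inner by metis
qed

lemma mahalanobis_sq_pos: "x \<noteq> 0 \<Longrightarrow> mahalanobis_sq x > 0"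
  using pos_def[rule_format, of "matrix_inv S *v x"]
  by (metis inner_commute mahalanobis_sq_def matrix_inv_cancel(2) matrix_vector_mult_0_right)

lemma mahalanobis_sq_scaleR: "mahalanobis_sq (c *\<^sub>R x) = c\<^sup>2 * mahalanobis_sq x"
  by (simp add: mahalanobis_sq_def matrix_vector_mult_scaleR power2_eq_square)

lemma continuous_on_mahalanobis_sq: "continuous_on UNIV mahalanobis_sq"
  unfolding mahalanobis_sq_def by (intro continuous_intros)

lemma mahalanobis_sq_coercive: "\<exists>m>0. \<forall>x. mahalanobis_sq x \<ge> m * (norm x)\<^sup>2"
proof -
  have "axis undefined 1 \<in> sphere (0::real^'n) 1" by simp
  then obtain z where z: "z \<in> sphere 0 1" "\<forall>y\<in>sphere 0 1. mahalanobis_sq z \<le> mahalanobis_sq y"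
    using continuous_attains_inf[OF compact_sphere _
        continuous_on_subset[OF continuous_on_mahalanobis_sq]] by blast
  have "mahalanobis_sq x \<ge> mahalanobis_sq z * (norm x)\<^sup>2" for x
  proof (cases "x = 0")
    case False
    have "mahalanobis_sq z \<le> mahalanobis_sq ((1 / norm x) *\<^sub>R x)" using z(2) False by auto
    also have "\<dots> = mahalanobis_sq x / (norm x)\<^sup>2"
      by (simp add: mahalanobis_sq_scaleR power_divide)
    finally show ?thesis using False by (simp add: field_simps)
  qed (simp add: mahalanobis_sq_def)
  moreover have "mahalanobis_sq z > 0" using z(1) by (intro mahalanobis_sq_pos) auto
  ultimately show ?thesis by blast
qed

lemma mahalanobis_sq_shift_axis:
  "mahalanobis_sq (x + t *\<^sub>R axis i 1) =
     mahalanobis_sq x + t * (2 * prec i x) + t\<^sup>2 * mahalanobis_sq (axis i 1)"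
proof -
  have "x \<bullet> (matrix_inv S *v axis i 1) = (transpose (matrix_inv S) *v x) $ i"
    by (simp add: inner_vec_def matrix_vector_mult_def transpose_def axis_def
        mult.commute if_distrib cong: if_cong)
  then have "x \<bullet> (matrix_inv S *v axis i 1) = prec i x"
    by (simp add: transpose_matrix_inv_if_symmetric[OF symmetric invertible] prec_def)
  moreover have "axis i 1 \<bullet> (matrix_inv S *v x) = prec i x"
    by (simp add: prec_def inner_axis')
  ultimately show ?thesis
    unfolding mahalanobis_sq_def
    by (simp add: matrix_vector_right_distrib matrix_vector_mult_scaleR inner_add_left
        inner_add_right algebra_simps power2_eq_square)
qed

definition gauss_const :: real where
  "gauss_const = (2 * pi) powr (- real CARD('n) / 2) * (det S) powr (- 1 / 2)"

lemma gauss_const_pos: "gauss_const > 0"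
  using det_nonzero by (simp add: gauss_const_def)

lemma gauss_density_eq: "gauss_density S x = gauss_const * exp (- (1/2) * mahalanobis_sq x)"
  by (simp add: gauss_density_def gauss_const_def mahalanobis_sq_def)

lemma gauss_density_pos: "gauss_density S x > 0"
  using gauss_const_pos by (simp add: gauss_density_eq)

lemma continuous_on_gauss_density: "continuous_on UNIV (gauss_density S)"
  unfolding gauss_density_eq by (intro continuous_intros continuous_on_mahalanobis_sq)

lemma gauss_density_has_derivative_axis:
  "((\<lambda>t. gauss_density S (x + t *\<^sub>R axis i 1)) has_real_derivative
     - prec i x * gauss_density S x) (at 0)"
proof -
  have "((\<lambda>t. gauss_const * exp (- (1/2) * (mahalanobis_sq x + t * (2 * prec i x) +
        t\<^sup>2 * mahalanobis_sq (axis i 1)))) has_real_derivative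
      - prec i x * (gauss_const * exp (- (1/2) * mahalanobis_sq x))) (at 0)"
    by (auto intro!: derivative_eq_intros)
  then show ?thesis
    by (simp add: gauss_density_eq mahalanobis_sq_shift_axis)
qed

lemma pdiff_times_gauss_density:
  assumes "\<And>x. ((\<lambda>t. P (x + t *\<^sub>R axis i 1)) has_real_derivative Q x) (at 0)"
  shows "pdiff i (\<lambda>x. c * P x * gauss_density S x) =
    (\<lambda>x. - c * (P x * prec i x - Q x) * gauss_density S x)"
proof
  fix x
  have "((\<lambda>t. c * P (x + t *\<^sub>R axis i 1) * gauss_density S (x + t *\<^sub>R axis i 1))
      has_real_derivative - c * (P x * prec i x - Q x) * gauss_density S x) (at 0)"
    using DERIV_mult'[OF DERIV_cmult[OF assms[of x], of c] gauss_density_has_derivative_axis[of x i]]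
    by (simp add: algebra_simps)
  then show "pdiff i (\<lambda>x. c * P x * gauss_density S x) x =
      - c * (P x * prec i x - Q x) * gauss_density S x"
    by (simp add: pdiff_def DERIV_imp_deriv)
qed

text \<open>Each derivative of \<open>\<phi>\<close> is a polynomial times \<open>\<phi>\<close>, and the differentiation of \<open>\<phi>\<close>
  itself contributes the top-degree factor \<open>-prec i x\<close>.\<close>
lemma foldr_pdiff_gauss_density:
  "\<exists>P. polyfun (length ds) P \<and>
     foldr pdiff ds (gauss_density S) = (\<lambda>x. (-1) ^ length ds * P x * gauss_density S x) \<and>
     (\<forall>x. ((\<lambda>s. P (s *\<^sub>R x) / s ^ length ds) \<longlongrightarrow> (\<Prod>i\<in>UNIV. prec i x ^ count_list ds i)) at_top)"
proof (induction ds)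
  case Nil
  show ?case by (intro exI[of _ "\<lambda>_. 1"]) (auto intro: polyfun_const)
next
  case (Cons d ds)
  define k where "k = length ds"
  obtain P where P: "polyfun k P"
    "foldr pdiff ds (gauss_density S) = (\<lambda>x. (-1) ^ k * P x * gauss_density S x)"
    "\<And>x. ((\<lambda>s. P (s *\<^sub>R x) / s ^ k) \<longlongrightarrow> (\<Prod>i\<in>UNIV. prec i x ^ count_list ds i)) at_top"
    using Cons unfolding k_def by blast
  obtain Q where Q: "polyfun (k - 1) Q"
    "\<And>x. ((\<lambda>t. P (x + t *\<^sub>R axis d 1)) has_real_derivative Q x) (at 0)"
    using polyfun_has_derivative_axis[OF P(1), of d] by blast
  define P' where "P' x = P x * prec d x - Q x" for x
  have "polyfun (k + 1) (\<lambda>x. P x * prec d x)"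
    using polyfun_mult[OF P(1) polyfun_prec] .
  moreover have Qk: "polyfun k Q" using Q(1) by (rule polyfun_mono) simp
  ultimately have "polyfun (length (d # ds)) P'"
    unfolding P'_def k_def by (auto intro!: polyfun_diff elim: polyfun_mono)
  moreover have "foldr pdiff (d # ds) (gauss_density S) =
      (\<lambda>x. (-1) ^ length (d # ds) * P' x * gauss_density S x)"
    using pdiff_times_gauss_density[OF Q(2), of "(-1) ^ k"] by (simp add: P(2) P'_def k_def)
  moreover have "((\<lambda>s. P' (s *\<^sub>R x) / s ^ length (d # ds)) \<longlongrightarrow>
      (\<Prod>i\<in>UNIV. prec i x ^ count_list (d # ds) i)) at_top" for x
  proof -
    have "((\<lambda>s. (P (s *\<^sub>R x) / s ^ k) * prec d x - Q (s *\<^sub>R x) / s ^ (k + 1)) \<longlongrightarrow>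
        (\<Prod>i\<in>UNIV. prec i x ^ count_list ds i) * prec d x - 0) at_top"
      by (intro tendsto_diff tendsto_mult P(3) tendsto_const polyfun_scaled_tendsto_0 Qk)
    moreover have "eventually (\<lambda>s. (P (s *\<^sub>R x) / s ^ k) * prec d x - Q (s *\<^sub>R x) / s ^ (k + 1) =
        P' (s *\<^sub>R x) / s ^ length (d # ds)) at_top"
      using eventually_gt_at_top[of "0::real"]
      by eventually_elim (simp add: P'_def prec_scaleR k_def field_simps)
    ultimately show ?thesis
      unfolding prod_power_count_list_Cons by (simp add: tendsto_cong mult.commute)
  qed
  ultimately show ?case by blast
qed

lemma hermite_eq_polyfun:
  "\<exists>P. polyfun (mi_order j) P \<and> hermite S j = P \<and>
     (\<forall>x. ((\<lambda>s. P (s *\<^sub>R x) / s ^ mi_order j) \<longlongrightarrow> (\<Prod>i\<in>UNIV. prec i x ^ j i)) at_top)"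
proof -
  define ds where "ds = (SOME ds. \<forall>i. count_list ds i = j i)"
  have ds: "\<forall>i. count_list ds i = j i"
    unfolding ds_def using someI_ex[OF ex_count_list_eq] .
  have len: "length ds = mi_order j"
    using sum_count_set[of ds UNIV] ds by (simp add: mi_order_def)
  obtain P where P: "polyfun (length ds) P"
    "foldr pdiff ds (gauss_density S) = (\<lambda>x. (-1) ^ length ds * P x * gauss_density S x)"
    "\<forall>x. ((\<lambda>s. P (s *\<^sub>R x) / s ^ length ds) \<longlongrightarrow> (\<Prod>i\<in>UNIV. prec i x ^ count_list ds i)) at_top"
    using foldr_pdiff_gauss_density by blast
  have "hermite S j x = P x" for x
    using P(2) len gauss_density_pos[of x]
    by (simp add: hermite_def mderiv_def ds_def[symmetric] flip: power_add)
  then have "hermite S j = P" by blast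
  then show ?thesis using P len ds by auto
qed

lemma polyfun_hermite: "polyfun (mi_order j) (hermite S j)"
  using hermite_eq_polyfun by blast

lemma hermite_leading_term:
  "((\<lambda>s. hermite S j (s *\<^sub>R x) / s ^ mi_order j) \<longlongrightarrow> (\<Prod>i\<in>UNIV. prec i x ^ j i)) at_top"
  using hermite_eq_polyfun by blast

lemma polyfun_psi: "polyfun (mi_order j) (psi S j)"
proof -
  have "psi S j = (\<lambda>x. inverse (sqrt (LINT y|lborel. (hermite S j y)\<^sup>2 * gauss_density S y)) * hermite S j x)"
    by (simp add: psi_def[abs_def] divide_inverse mult.commute)
  then show ?thesis using polyfun_cmult[OF polyfun_hermite] by metis
qed

text \<open>Hermite polynomials of equal order are linearly independent: substituting
  \<open>x = s \<Sigma> y\<close> and letting \<open>s \<rightarrow> \<infinity>\<close> leaves the monomials \<open>y\<^sup>j\<close>.\<close>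
lemma hermite_combination_nonzero:
  assumes "finite J" "J \<subseteq> {j. mi_order j = l}" "j0 \<in> J" "c j0 \<noteq> 0"
  shows "\<exists>x. (\<Sum>j\<in>J. c j * hermite S j x) \<noteq> 0"
proof (rule ccontr)
  assume "\<not> ?thesis"
  then have zero: "(\<Sum>j\<in>J. c j * hermite S j x) = 0" for x by blast
  have "(\<Sum>j\<in>J. c j * (\<Prod>i\<in>UNIV. y i ^ j i)) = 0" for y
  proof -
    define x where "x = S *v (\<chi> i. y i)"
    have "((\<lambda>s. \<Sum>j\<in>J. c j * (hermite S j (s *\<^sub>R x) / s ^ l)) \<longlongrightarrow>
        (\<Sum>j\<in>J. c j * (\<Prod>i\<in>UNIV. prec i x ^ j i))) at_top"
      using assms(2) hermite_leading_term by (intro tendsto_sum tendsto_mult tendsto_const) auto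
    moreover have "(\<lambda>s. \<Sum>j\<in>J. c j * (hermite S j (s *\<^sub>R x) / s ^ l)) = (\<lambda>s. 0)"
      using zero by (simp add: times_divide_eq_right flip: sum_divide_distrib)
    ultimately show ?thesis by (simp add: x_def tendsto_const_iff)
  qed
  then have "\<forall>j\<in>J. c j = 0"
    using assms(1) by (intro polynomial_eq_0_imp_coeffs_eq_0[of UNIV]) (auto simp: fun_eq_iff)
  with assms(3,4) show False by blast
qed

lemma hermite_nonzero: "\<exists>x. hermite S j x \<noteq> 0"
  using hermite_combination_nonzero[of "{j}" "mi_order j" j "\<lambda>_. 1"] by simp

lemma power_times_exp_mahalanobis_sq_bounded:
  "\<exists>B. \<forall>x. (1 + norm x) ^ k * exp (- mahalanobis_sq x / 4) \<le> B"
proof -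
  obtain m where m: "m > 0" "\<And>x. mahalanobis_sq x \<ge> m * (norm x)\<^sup>2"
    using mahalanobis_sq_coercive by blast
  have "(1 + norm x) ^ k * exp (- mahalanobis_sq x / 4) \<le> exp (real k ^ 2 / m)" for x
  proof -
    define r where "r = norm x"
    have "(1 + r) ^ k \<le> exp r ^ k" by (intro power_mono) (auto simp: r_def)
    then have "(1 + r) ^ k * exp (- mahalanobis_sq x / 4) \<le> exp (real k * r) * exp (- (m * r\<^sup>2 / 4))"
      using m(2)[of x] by (intro mult_mono) (auto simp: r_def exp_of_nat_mult)
    also have "\<dots> = exp (real k * r - m * r\<^sup>2 / 4)" by (simp add: exp_add[symmetric])
    also have "\<dots> \<le> exp (real k ^ 2 / m)"
    proof -
      have "real k ^ 2 / m - (real k * r - m * r\<^sup>2 / 4) = (m * r / 2 - real k)\<^sup>2 / m"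
        using m(1) by (simp add: power2_eq_square field_simps)
      then show ?thesis using m(1) by (smt (verit) divide_nonneg_pos exp_le_cancel_iff zero_le_power2)
    qed
    finally show ?thesis by (simp add: r_def)
  qed
  then show ?thesis by blast
qed

text \<open>\<open>\<phi> p\<close> is dominated by a multiple of
  \<open>\<phi>(x/\<surd>2) = gauss_const \<cdot> exp(-mahalanobis_sq x / 4)\<close>, which is integrable because \<open>\<phi>\<close> is.\<close>
lemma integrable_gauss_density_polyfun:
  assumes int: "integrable lborel (gauss_density S)" and p: "polyfun k p"
  shows "integrable lborel (\<lambda>x. gauss_density S x * p x)"
proof -
  obtain C where C: "C \<ge> 0" "\<And>x. \<bar>p x\<bar> \<le> C * (1 + norm x) ^ k"
    using polyfun_bound[OF p] by blast
  obtain B where B: "\<And>x. (1 + norm x) ^ k * exp (- mahalanobis_sq x / 4) \<le> B"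
    using power_times_exp_mahalanobis_sq_bounded by blast
  define c where "c = 1 / sqrt 2"
  have gauss_c: "gauss_density S (c *\<^sub>R x) = gauss_const * exp (- mahalanobis_sq x / 4)" for x
    by (simp add: gauss_density_eq mahalanobis_sq_scaleR c_def power_divide)
  have bound: "norm (gauss_density S x * p x) \<le> norm (C * B * gauss_density S (c *\<^sub>R x))" for x
  proof -
    have "exp (- mahalanobis_sq x / 4) * \<bar>p x\<bar> \<le>
        C * ((1 + norm x) ^ k * exp (- mahalanobis_sq x / 4))"
      using mult_left_mono[OF C(2), of "exp (- mahalanobis_sq x / 4)"] by (simp add: algebra_simps)
    also have "\<dots> \<le> C * B" using B C(1) by (rule mult_left_mono)
    finally have tail: "exp (- mahalanobis_sq x / 4) * \<bar>p x\<bar> \<le> C * B" .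
    have "norm (gauss_density S x * p x) =
        gauss_const * exp (- mahalanobis_sq x / 4) * (exp (- mahalanobis_sq x / 4) * \<bar>p x\<bar>)"
      using gauss_const_pos by (simp add: gauss_density_eq abs_mult mult_exp_exp)
    also have "\<dots> \<le> gauss_const * exp (- mahalanobis_sq x / 4) * (C * B)"
      using gauss_const_pos tail by (intro mult_left_mono) auto
    also have "\<dots> \<le> norm (C * B * gauss_density S (c *\<^sub>R x))"
      unfolding gauss_c by (simp add: mult.commute)
    finally show ?thesis .
  qed
  have "integrable lborel (\<lambda>x. C * B * gauss_density S (c *\<^sub>R x))"
    using lborel_integrable_euclidean_affine[OF int, of c 0] by (simp add: c_def)
  moreover have "(\<lambda>x. gauss_density S x * p x) \<in> borel_measurable lborel"
    using borel_measurable_continuous_onI[OF continuous_on_gauss_density]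
      polyfun_borel_measurable[OF p] by simp
  ultimately show ?thesis
    using bound by (rule Bochner_Integration.integrable_bound[OF _ _ AE_I2])
qed

lemma integral_gauss_density_square_pos:
  assumes "integrable lborel (gauss_density S)" "polyfun k g" "g z \<noteq> 0"
  shows "(\<integral>x. gauss_density S x * (g x)\<^sup>2 \<partial>lborel) > 0"
proof -
  have "polyfun (k + k) (\<lambda>x. (g x)\<^sup>2)"
    using polyfun_mult[OF assms(2) assms(2)] by (simp add: power2_eq_square)
  then show ?thesis
    using assms gauss_density_pos[of z] less_imp_le[OF gauss_density_pos]
    by (intro integral_pos_if_continuous[where z=z] continuous_intros continuous_on_gauss_density
        polyfun_continuous_on[OF assms(2)] integrable_gauss_density_polyfun) auto
qed

lemma integral_hermite_square_pos:
  assumes "integrable lborel (gauss_density S)"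
  shows "(\<integral>x. (hermite S j x)\<^sup>2 * gauss_density S x \<partial>lborel) > 0"
  using hermite_nonzero[of j] integral_gauss_density_square_pos[OF assms polyfun_hermite]
  by (auto simp: mult.commute)

context
  fixes M :: "'a measure" and X :: "'a \<Rightarrow> real^'n"
  assumes X: "distributed M lborel X (\<lambda>x. ennreal (gauss_density S x))"
begin

lemma integrable_polyfun_distributed:
  assumes "polyfun k p" "integrable lborel (gauss_density S)"
  shows "integrable M (\<lambda>\<omega>. p (X \<omega>))"
  using distributed_integrable[OF X, of p] polyfun_borel_measurable[OF assms(1)]
    integrable_gauss_density_polyfun[OF assms(2,1)] less_imp_le[OF gauss_density_pos]
  by simp

lemma integral_polyfun_distributed:
  assumes "polyfun k p"
  shows "(\<integral>\<omega>. p (X \<omega>) \<partial>M) = (\<integral>x. gauss_density S x * p x \<partial>lborel)"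
  using distributed_integral[OF X, of p] polyfun_borel_measurable[OF assms(1)]
    less_imp_le[OF gauss_density_pos] by simp

lemma integrable_gauss_density_if_distributed:
  assumes "finite_measure M"
  shows "integrable lborel (gauss_density S)"
  using distributed_integrable[OF X, of "\<lambda>_. 1"] less_imp_le[OF gauss_density_pos]
    finite_measure.integrable_const[OF assms]
  by simp

end

lemma psi_combination_nonzero:
  assumes "integrable lborel (gauss_density S)"
    and js: "distinct js" "set js \<subseteq> {j. mi_order j = l}"
    and a0: "a0 < length js" "v a0 \<noteq> 0"
  shows "\<exists>z. (\<Sum>a<length js. v a * psi S (js ! a) z) \<noteq> 0"
proof -
  define N where "N j = (\<integral>y. (hermite S j y)\<^sup>2 * gauss_density S y \<partial>lborel)" for j
  have bij: "bij_betw ((!) js) {..<length js} (set js)"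
    using bij_betw_nth[OF js(1) refl refl] .
  define c where "c j = v (the_inv_into {..<length js} ((!) js) j) / sqrt (N j)" for j
  have c_nth: "c (js ! a) = v a / sqrt (N (js ! a))" if "a < length js" for a
    using that the_inv_into_f_f[OF bij_betw_imp_inj_on[OF bij]] by (simp add: c_def)
  have "(\<Sum>a<length js. v a * psi S (js ! a) x) = (\<Sum>j\<in>set js. c j * hermite S j x)" for x
    using sum.reindex_bij_betw[OF bij, of "\<lambda>j. c j * hermite S j x"]
    by (simp add: c_nth N_def psi_def)
  moreover have "c (js ! a0) \<noteq> 0"
    using a0 integral_hermite_square_pos[OF assms(1), of "js ! a0"] by (simp add: c_nth N_def)
  ultimately show ?thesis
    using hermite_combination_nonzero[of "set js" l "js ! a0" c] js(2) a0(1) by auto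
qed

lemma pos_def_mat_gram_psi:
  assumes "prob_space M" and X: "distributed M lborel X (\<lambda>x. ennreal (gauss_density S x))"
    and js: "distinct js" "set js \<subseteq> {j. mi_order j = l}"
  shows "pos_def_mat (length js)
    (\<lambda>a b. prob_space.expectation M (\<lambda>\<omega>. psi S (js!a) (X \<omega>) * psi S (js!b) (X \<omega>)))"
  unfolding pos_def_mat_def
proof (intro allI impI)
  interpret prob_space M by fact
  fix v :: "nat \<Rightarrow> real"
  assume "\<exists>a<length js. v a \<noteq> 0"
  then obtain a0 where a0: "a0 < length js" "v a0 \<noteq> 0" by blast
  have gauss_int: "integrable lborel (gauss_density S)"
    using integrable_gauss_density_if_distributed[OF X] finite_measure_axioms by blast
  define g where "g x = (\<Sum>a<length js. v a * psi S (js ! a) x)" for x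
  have g: "polyfun l g"
    unfolding g_def using js(2) nth_mem polyfun_psi
    by (intro polyfun_sum polyfun_cmult) fastforce+
  have "(\<Sum>a<length js. \<Sum>b<length js.
        v a * expectation (\<lambda>\<omega>. psi S (js!a) (X \<omega>) * psi S (js!b) (X \<omega>)) * v b) =
      expectation (\<lambda>\<omega>. (g (X \<omega>))\<^sup>2)"
    unfolding g_def
    using integrable_polyfun_distributed[OF X polyfun_mult[OF polyfun_psi polyfun_psi] gauss_int]
    by (intro quadratic_form_eq_integral_square) auto
  also have "\<dots> = (\<integral>x. gauss_density S x * (g x)\<^sup>2 \<partial>lborel)"
    using integral_polyfun_distributed[OF X, of "l + l" "\<lambda>x. (g x)\<^sup>2"] polyfun_mult[OF g g]
    by (simp add: power2_eq_square)
  also have "\<dots> > 0"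
    using psi_combination_nonzero[OF gauss_int js, of a0 v] a0 g
      integral_gauss_density_square_pos[OF gauss_int]
    unfolding g_def by blast
  finally show "(\<Sum>a<length js. \<Sum>b<length js.
      v a * expectation (\<lambda>\<omega>. psi S (js!a) (X \<omega>) * psi S (js!b) (X \<omega>)) * v b) > 0" .
qed

end

theorem corollary12:
  fixes M :: "'a measure" and X :: "'a \<Rightarrow> real^'n"
    and S :: "real^'n^'n" and l :: nat and js :: "('n \<Rightarrow> nat) list"
  assumes "prob_space M"
    and "transpose S = S"
    and "\<forall>x::real^'n. x \<noteq> 0 \<longrightarrow> x \<bullet> (S *v x) > 0"
    and "distributed M lborel X (\<lambda>x. ennreal (gauss_density S x))"
    and "distinct js" and "set js = {j. mi_order j = l}"
  shows "(\<forall>a<length js. \<forall>b<length js.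
            prob_space.expectation M (\<lambda>\<omega>. psi S (js!a) (X \<omega>) * psi S (js!b) (X \<omega>))
          = prob_space.expectation M (\<lambda>\<omega>. psi S (js!b) (X \<omega>) * psi S (js!a) (X \<omega>)))
       \<and> pos_def_mat (length js)
           (\<lambda>a b. prob_space.expectation M (\<lambda>\<omega>. psi S (js!a) (X \<omega>) * psi S (js!b) (X \<omega>)))"
proof -
  interpret covariance_matrix S
    using assms(2,3) by unfold_locales
  show ?thesis
    using pos_def_mat_gram_psi[OF assms(1,4,5), of l] assms(6) by (simp add: mult.commute)
qed

end
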